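(* Let $K$ be a field of characteristic $0$ and let $m=x_1^{\alpha_1}\cdots x_n^{\alpha_n}$ with $\alpha_i\ge1$ for all $i$. Then the Lie algebra $\mathfrak{g}_m$ is the space of diagonal matrices $\mathrm{diag}(\lambda_1,\ldots,\lambda_n)$ such that $\sum_{i=1}^n\alpha_i\lambda_i=0$.
   Context: For $P\in K[x_1,\ldots,x_n]$, the Lie algebra $\mathfrak{g}_P$ of $P$ is the Lie algebra (tangent space at the identity) of the group of invariants $\{A\in GL_n(K): P(A.x)=P(x)\}$; equivalently, $\mathfrak{g}_P$ is the linear subspace of matrices $A=(a_{ij})\in M_n(K)$ such that $\sum_{i,j\in[n]} a_{ij}\,x_j\,\frac{\partial P}{\partial x_i}=0$. *)

theory Defs
  imports "HOL-Analysis.Analysis" "HOL-Library.Poly_Mapping"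
begin

text \<open>Multivariate polynomials over a coefficient ring 'a in variables indexed by the
  finite type 'n: finitely supported maps from exponent vectors (finitely supported 'n to nat) to
  coefficients; multiplication is the convolution product of Poly_Mapping.\<close>

type_synonym ('n, 'a) mpoly = "('n \<Rightarrow>\<^sub>0 nat) \<Rightarrow>\<^sub>0 'a"

definition mp_const :: "'a::zero \<Rightarrow> ('n, 'a) mpoly" where
  "mp_const c = Poly_Mapping.single 0 c"

definition mp_var :: "'n \<Rightarrow> ('n, 'a::{zero,one}) mpoly" where
  "mp_var j = Poly_Mapping.single (Poly_Mapping.single j 1) 1"

definition mp_monom :: "('n \<Rightarrow>\<^sub>0 nat) \<Rightarrow> ('n, 'a::{zero,one}) mpoly" where
  "mp_monom alpha = Poly_Mapping.single alpha 1"

definition mp_pderiv :: "'n \<Rightarrow> ('n, 'a::semiring_1) mpoly \<Rightarrow> ('n, 'a) mpoly" where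
  "mp_pderiv i p = (\<Sum>\<beta>\<in>Poly_Mapping.keys p.
      Poly_Mapping.single (\<beta> - Poly_Mapping.single i 1)
        (of_nat (Poly_Mapping.lookup \<beta> i) * Poly_Mapping.lookup p \<beta>))"

definition lie_alg :: "('n::finite, 'a::comm_ring_1) mpoly \<Rightarrow> ('a ^ 'n ^ 'n) set" where
  "lie_alg P = {A. (\<Sum>i\<in>UNIV. \<Sum>j\<in>UNIV.
      mp_const (A $ i $ j) * mp_var j * mp_pderiv i P) = 0}"

end

(* Each term of the derivation applied to the monomial is a monomial:
   a_ij x_j d/dx_i x^alpha = alpha_i a_ij x^(alpha - e_i + e_j).  Since every alpha_i >= 1,
   the exponents alpha - e_i + e_j with i <> j are pairwise distinct and different from alpha,
   while all diagonal terms have exponent alpha.  Comparing coefficients, the derivation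
   vanishes iff alpha_i a_ij = 0 for i <> j and sum_i alpha_i a_ii = 0; in characteristic 0
   the factors alpha_i are nonzero. *)
theory Submission
  imports Defs
begin

definition matrix_derivation ::
    "'a ^ 'n ^ 'n \<Rightarrow> ('n::finite, 'a::comm_ring_1) mpoly \<Rightarrow> ('n, 'a) mpoly" where
  "matrix_derivation A P =
     (\<Sum>i\<in>UNIV. \<Sum>j\<in>UNIV. mp_const (A $ i $ j) * mp_var j * mp_pderiv i P)"

lemma lie_alg_iff_matrix_derivation: "A \<in> lie_alg P \<longleftrightarrow> matrix_derivation A P = 0"
  by (simp add: lie_alg_def matrix_derivation_def)

text \<open>The exponent \<open>\<alpha> - e\<^sub>i + e\<^sub>j\<close> of \<open>x\<^sub>j \<partial>\<^sub>i x\<^sup>\<alpha>\<close>; the subtraction truncates,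
  so it is only meaningful when \<open>\<alpha>\<^sub>i \<ge> 1\<close>.\<close>
definition shift_exp :: "('n \<Rightarrow>\<^sub>0 nat) \<Rightarrow> 'n \<Rightarrow> 'n \<Rightarrow> ('n \<Rightarrow>\<^sub>0 nat)" where
  "shift_exp alpha i j = Poly_Mapping.single j 1 + (alpha - Poly_Mapping.single i 1)"

lemma lookup_shift_exp:
  assumes "Poly_Mapping.lookup alpha i \<ge> 1"
  shows "Poly_Mapping.lookup (shift_exp alpha i j) x + (1 when i = x) =
         Poly_Mapping.lookup alpha x + (1 when j = x)"
  using assms by (auto simp: shift_exp_def lookup_add lookup_minus lookup_single when_def)

lemma shift_exp_diag:
  assumes "Poly_Mapping.lookup alpha i \<ge> 1"
  shows "shift_exp alpha i i = alpha"
proof (rule poly_mapping_eqI)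
  fix x
  show "Poly_Mapping.lookup (shift_exp alpha i i) x = Poly_Mapping.lookup alpha x"
    using lookup_shift_exp[OF assms, of i x] by simp
qed

lemma shift_exp_eq_iff:
  assumes "Poly_Mapping.lookup alpha i \<ge> 1" and "Poly_Mapping.lookup alpha k \<ge> 1"
  shows "shift_exp alpha i j = shift_exp alpha k l \<longleftrightarrow> (i = k \<and> j = l) \<or> (i = j \<and> k = l)"
proof
  assume "shift_exp alpha i j = shift_exp alpha k l"
  then have "(1 when j = x) + (1 when k = x) = (1 when l = x) + ((1::nat) when i = x)" for x
    using lookup_shift_exp[OF assms(1), of j x] lookup_shift_exp[OF assms(2), of l x] by simp
  from this[of i] this[of j] this[of k] show "(i = k \<and> j = l) \<or> (i = j \<and> k = l)"
    by (auto simp: when_def split: if_splits)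
next
  assume "(i = k \<and> j = l) \<or> (i = j \<and> k = l)"
  then show "shift_exp alpha i j = shift_exp alpha k l"
    using assms by (auto simp: shift_exp_diag)
qed

lemma mp_pderiv_monom:
  "mp_pderiv i (mp_monom alpha :: ('n, 'a::semiring_1) mpoly) =
     Poly_Mapping.single (alpha - Poly_Mapping.single i 1) (of_nat (Poly_Mapping.lookup alpha i))"
  by (simp add: mp_pderiv_def mp_monom_def)

lemma matrix_derivation_monom:
  "matrix_derivation A (mp_monom alpha) =
     (\<Sum>(i, j)\<in>UNIV. Poly_Mapping.single (shift_exp alpha i j)
                      (of_nat (Poly_Mapping.lookup alpha i) * A $ i $ j))"
  by (simp add: matrix_derivation_def mp_pderiv_monom mp_const_def mp_var_def shift_exp_def
      mult_single mult.commute sum.cartesian_product flip: UNIV_Times_UNIV)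

lemma keys_matrix_derivation_monom:
  "Poly_Mapping.keys (matrix_derivation A (mp_monom alpha)) \<subseteq> {shift_exp alpha i j | i j. True}"
  unfolding matrix_derivation_monom by (rule order_trans[OF keys_sum]) (fastforce split: if_splits)

lemma matrix_derivation_monom_eq_0_iff:
  "matrix_derivation A (mp_monom alpha) = 0 \<longleftrightarrow>
     (\<forall>k l. Poly_Mapping.lookup (matrix_derivation A (mp_monom alpha)) (shift_exp alpha k l) = 0)"
  (is "?D = 0 \<longleftrightarrow> _")
proof
  assume vanish: "\<forall>k l. Poly_Mapping.lookup ?D (shift_exp alpha k l) = 0"
  show "?D = 0"
  proof (rule poly_mapping_eqI)
    fix x
    show "Poly_Mapping.lookup ?D x = Poly_Mapping.lookup 0 x"
    proof (cases "x \<in> Poly_Mapping.keys ?D")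
      case True
      then obtain i j where "x = shift_exp alpha i j"
        using keys_matrix_derivation_monom by blast
      with vanish show ?thesis by simp
    qed (simp add: in_keys_iff)
  qed
qed simp

lemma lookup_matrix_derivation_monom:
  assumes "\<forall>i. Poly_Mapping.lookup alpha i \<ge> 1"
  shows "Poly_Mapping.lookup (matrix_derivation A (mp_monom alpha)) (shift_exp alpha k l) =
    (if k = l then \<Sum>i\<in>UNIV. of_nat (Poly_Mapping.lookup alpha i) * A $ i $ i
     else of_nat (Poly_Mapping.lookup alpha k) * A $ k $ l)"
proof -
  let ?c = "\<lambda>i j. of_nat (Poly_Mapping.lookup alpha i) * A $ i $ j"
  have "Poly_Mapping.lookup (matrix_derivation A (mp_monom alpha)) (shift_exp alpha k l) =
    (\<Sum>i\<in>UNIV. \<Sum>j\<in>UNIV. if (i = k \<and> j = l) \<or> (i = j \<and> k = l) then ?c i j else 0)"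
    using assms by (simp add: matrix_derivation_monom lookup_sum lookup_single when_def
        shift_exp_eq_iff case_prod_unfold sum.cartesian_product flip: UNIV_Times_UNIV)
  also have "\<dots> = (if k = l then \<Sum>i\<in>UNIV. ?c i i else ?c k l)"
  proof (cases "k = l")
    case True
    then have "(i = k \<and> j = l) \<or> (i = j \<and> k = l) \<longleftrightarrow> j = i" for i j
      by blast
    with True show ?thesis by simp
  next
    case False
    then have "(\<Sum>j\<in>UNIV. if (i = k \<and> j = l) \<or> (i = j \<and> k = l) then ?c i j else 0) =
        (if i = k then ?c k l else 0)" for i
      by (cases "i = k") simp_all
    with False show ?thesis by simp
  qed
  finally show ?thesis .
qed

theorem proposition4:
  fixes alpha :: "'n::finite \<Rightarrow>\<^sub>0 nat"
  assumes "\<forall>i. Poly_Mapping.lookup alpha i \<ge> 1"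
  shows "lie_alg (mp_monom alpha :: ('n, 'a::field_char_0) mpoly) =
    {A. (\<forall>i j. i \<noteq> j \<longrightarrow> A $ i $ j = 0) \<and>
        (\<Sum>i\<in>UNIV. of_nat (Poly_Mapping.lookup alpha i) * A $ i $ i) = 0}"
proof (rule set_eqI)
  fix A :: "'a ^ 'n ^ 'n"
  let ?trace = "\<Sum>i\<in>UNIV. of_nat (Poly_Mapping.lookup alpha i) * A $ i $ i"
  have nonzero: "(of_nat (Poly_Mapping.lookup alpha k) :: 'a) \<noteq> 0" for k
    using assms by (simp add: Suc_le_eq)
  have "A \<in> lie_alg (mp_monom alpha) \<longleftrightarrow>
      (\<forall>k l. (if k = l then ?trace else of_nat (Poly_Mapping.lookup alpha k) * A $ k $ l) = 0)"
    by (simp add: lie_alg_iff_matrix_derivation matrix_derivation_monom_eq_0_iff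
        lookup_matrix_derivation_monom[OF assms])
  also have "\<dots> \<longleftrightarrow> (\<forall>i j. i \<noteq> j \<longrightarrow> A $ i $ j = 0) \<and> ?trace = 0"
  proof
    assume vanish: "\<forall>k l. (if k = l then ?trace
      else of_nat (Poly_Mapping.lookup alpha k) * A $ k $ l) = 0"
    have "A $ i $ j = 0" if "i \<noteq> j" for i j
      using vanish[rule_format, of i j] that nonzero[of i] by simp
    moreover have "?trace = 0"
      using vanish[rule_format, of undefined undefined] by simp
    ultimately show "(\<forall>i j. i \<noteq> j \<longrightarrow> A $ i $ j = 0) \<and> ?trace = 0"
      by blast
  qed simp
  finally show "A \<in> lie_alg (mp_monom alpha) \<longleftrightarrow> A \<in> {A. (\<forall>i j. i \<noteq> j \<longrightarrow> A $ i $ j = 0) \<and>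
      (\<Sum>i\<in>UNIV. of_nat (Poly_Mapping.lookup alpha i) * A $ i $ i) = 0}"
    by simp
qed

end
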